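(* The principal branch $W$ of Lambert's W function, restricted to $(0,\infty)$, is a complete Bernstein function.
   Context: $W$ is the principal branch of Lambert's W function: the holomorphic function on $\mathbb{C}\setminus(-\infty,-1/e]$ satisfying $W(z)e^{W(z)}=z$ with $W(z)=\sum_{n\ge1}(-n)^{n-1}z^n/n!$ near $0$. A $C^\infty$ function $g:(0,\infty)\to\mathbb{R}$ is completely monotonic if $(-1)^ng^{(n)}(z)\ge0$ for all $z>0$, $n\ge0$; $f$ is a Bernstein function if $f$ is $C^\infty$, $f(z)>0$ for $z>0$, and $f'$ is completely monotonic. A Bernstein function $f$ is complete if it has an analytic continuation to the upper half-plane $\mathbb{H}^+=\{z\in\mathbb{C}:\Im z>0\}$ with $f(\mathbb{H}^+)\subset\mathbb{H}^+$. *)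

theory Defs
  imports "HOL-Complex_Analysis.Complex_Analysis"
begin

definition lambert_slit_plane :: "complex set" where
  "lambert_slit_plane = - {z. Im z = 0 \<and> Re z \<le> - exp (-1)}"

definition principal_lambert_W :: "(complex \<Rightarrow> complex) \<Rightarrow> bool" where
  "principal_lambert_W W \<longleftrightarrow>
     W holomorphic_on lambert_slit_plane \<and>
     (\<forall>z\<in>lambert_slit_plane. W z * exp (W z) = z) \<and>
     (\<exists>r>0. \<forall>z. norm z < r \<longrightarrow>
        (\<lambda>n. if n = 0 then 0
              else (- of_nat n) ^ (n - 1) * z ^ n / fact n) sums W z)"

definition smooth_pos :: "(real \<Rightarrow> real) \<Rightarrow> bool" where
  "smooth_pos g \<longleftrightarrow> (\<forall>n. \<forall>x>0. ((deriv ^^ n) g) differentiable (at x))"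

definition completely_monotonic :: "(real \<Rightarrow> real) \<Rightarrow> bool" where
  "completely_monotonic g \<longleftrightarrow> smooth_pos g \<and>
     (\<forall>n. \<forall>x>0. (-1) ^ n * (deriv ^^ n) g x \<ge> 0)"

definition bernstein_function :: "(real \<Rightarrow> real) \<Rightarrow> bool" where
  "bernstein_function f \<longleftrightarrow> smooth_pos f \<and> (\<forall>x>0. f x > 0) \<and>
     completely_monotonic (deriv f)"

definition complete_bernstein_function :: "(real \<Rightarrow> real) \<Rightarrow> bool" where
  "complete_bernstein_function f \<longleftrightarrow> bernstein_function f \<and>
     (\<exists>F U. open U \<and> {z. Im z > 0} \<subseteq> U \<and> complex_of_real ` {0<..} \<subseteq> U \<and>
        F holomorphic_on U \<and>
        (\<forall>x>0. F (complex_of_real x) = complex_of_real (f x)) \<and>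
        (\<forall>z. Im z > 0 \<longrightarrow> Im (F z) > 0))"

end

theory Submission
  imports Defs
begin

text \<open>
  Differentiating \<open>W e\<^sup>W = z\<close> gives \<open>W' = g \<circ> W\<close> with \<open>g(w) = e\<^sup>-\<^sup>w / (1 + w)\<close>, a product of
  completely monotone functions. A completely monotone function composed with a positive function
  whose derivative is completely monotone up to order \<open>n\<close> is completely monotone up to order
  \<open>n + 1\<close> (chain and Leibniz rules), so bootstrapping along \<open>W' = g \<circ> W\<close> shows that \<open>W'\<close> is
  completely monotone on \<open>(0, \<infinity>)\<close>; all derivatives are taken of the holomorphic \<open>W\<close>, which is
  real on the positive axis because its Taylor coefficients at \<open>0\<close> are real.
  Finally \<open>W\<close> maps the upper half-plane into itself: \<open>W z\<close> real forces \<open>z = W z e\<^sup>W\<^sup>z\<close> real, so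
  \<open>Im \<circ> W\<close> has no zero on the connected upper half-plane, and it is positive near \<open>0\<close>
  because \<open>W'(0) = 1\<close>.
\<close>

text \<open>The comparison uses the partial order on \<^typ>\<open>complex\<close>, so \<open>0 \<le> z\<close> means that \<open>z\<close> is a
  nonnegative real.\<close>
definition cm_upto :: "nat \<Rightarrow> (complex \<Rightarrow> complex) \<Rightarrow> bool" where
  "cm_upto n F \<longleftrightarrow> (\<forall>k\<le>n. \<forall>x>0. 0 \<le> (-1) ^ k * (deriv ^^ k) F (complex_of_real x))"

lemma cm_upto_mono: "cm_upto n F \<Longrightarrow> m \<le> n \<Longrightarrow> cm_upto m F"
  unfolding cm_upto_def by auto

lemma cm_upto_0: "cm_upto 0 F \<longleftrightarrow> (\<forall>x>0. 0 \<le> F (complex_of_real x))"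
  unfolding cm_upto_def by simp

lemma cm_upto_cong:
  assumes "F holomorphic_on U" "G holomorphic_on U" "open U" "\<And>x. x > 0 \<Longrightarrow> complex_of_real x \<in> U"
    and "\<And>z. z \<in> U \<Longrightarrow> F z = G z"
  shows "cm_upto n F \<longleftrightarrow> cm_upto n G"
  unfolding cm_upto_def using higher_deriv_transform_within_open[OF assms(1-3) assms(4) assms(5)] by metis

lemma cm_upto_Suc_iff:
  assumes F: "F holomorphic_on U" and U: "open U" and pos: "\<And>x. x > 0 \<Longrightarrow> complex_of_real x \<in> U"
  shows "cm_upto (Suc n) F \<longleftrightarrow> cm_upto 0 F \<and> cm_upto n (\<lambda>z. - deriv F z)"
proof -
  have "(-1) ^ k * (deriv ^^ k) (\<lambda>z. - deriv F z) (complex_of_real x) =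
        (-1) ^ Suc k * (deriv ^^ Suc k) F (complex_of_real x)" if "x > 0" for k x
    using higher_deriv_uminus[OF holomorphic_deriv[OF F U] U pos[OF that], of k]
    by (simp add: funpow_Suc_right del: funpow.simps)
  then show ?thesis
    unfolding cm_upto_def by (simp add: less_Suc_eq_le [symmetric] All_less_Suc2)
qed

lemma cm_upto_mult:
  assumes F: "F holomorphic_on U" and G: "G holomorphic_on U" and U: "open U"
    and pos: "\<And>x. x > 0 \<Longrightarrow> complex_of_real x \<in> U"
    and "cm_upto n F" "cm_upto n G"
  shows "cm_upto n (\<lambda>z. F z * G z)"
  unfolding cm_upto_def
proof (intro allI impI)
  fix k and x :: real assume k: "k \<le> n" and x: "x > 0"
  let ?z = "complex_of_real x"
  have "(-1) ^ k * (deriv ^^ k) (\<lambda>z. F z * G z) ?z =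
      (\<Sum>i = 0..k. of_nat (k choose i) * ((-1) ^ i * (deriv ^^ i) F ?z) *
                    ((-1) ^ (k - i) * (deriv ^^ (k - i)) G ?z))"
    unfolding higher_deriv_mult[OF F G U pos[OF x]] sum_distrib_left
  proof (intro sum.cong refl)
    fix i assume "i \<in> {0..k}"
    then have "(-1 :: complex) ^ k = (-1) ^ i * (-1) ^ (k - i)"
      by (simp flip: power_add)
    then show "(-1) ^ k * (of_nat (k choose i) * (deriv ^^ i) F ?z * (deriv ^^ (k - i)) G ?z) =
        of_nat (k choose i) * ((-1) ^ i * (deriv ^^ i) F ?z) * ((-1) ^ (k - i) * (deriv ^^ (k - i)) G ?z)"
      by (simp add: algebra_simps)
  qed
  also have "0 \<le> \<dots>"
  proof (intro sum_nonneg mult_nonneg_nonneg[OF mult_nonneg_nonneg])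
    fix i assume "i \<in> {0..k}"
    then show "0 \<le> (-1) ^ i * (deriv ^^ i) F ?z" "0 \<le> (-1) ^ (k - i) * (deriv ^^ (k - i)) G ?z"
      using assms(5,6) k x unfolding cm_upto_def by auto
  qed (simp add: less_eq_complex_def)
  finally show "0 \<le> (-1) ^ k * (deriv ^^ k) (\<lambda>z. F z * G z) ?z" .
qed

lemma cm_upto_compose_Suc:
  assumes U: "open U" and V: "open V" and \<phi>: "\<phi> holomorphic_on U" "\<phi> ` U \<subseteq> V"
    and h: "h holomorphic_on V"
    and pos: "\<And>x. x > 0 \<Longrightarrow> complex_of_real x \<in> U"
    and h_nonneg: "cm_upto 0 (\<lambda>z. h (\<phi> z))"
    and \<phi>'_cm: "cm_upto n (deriv \<phi>)" and h'_cm: "cm_upto n (\<lambda>z. - deriv h (\<phi> z))"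
  shows "cm_upto (Suc n) (\<lambda>z. h (\<phi> z))"
proof -
  have h\<phi>: "(\<lambda>z. h (\<phi> z)) holomorphic_on U"
    using holomorphic_on_compose_gen[OF \<phi>(1) h \<phi>(2)] by (simp add: o_def)
  have h'\<phi>: "(\<lambda>z. - deriv h (\<phi> z)) holomorphic_on U"
    using holomorphic_on_compose_gen[OF \<phi>(1) holomorphic_deriv[OF h V] \<phi>(2)]
    by (simp add: o_def holomorphic_on_minus)
  have \<phi>': "deriv \<phi> holomorphic_on U"
    using \<phi>(1) U by (rule holomorphic_deriv)
  have chain: "- deriv (\<lambda>z. h (\<phi> z)) z = - deriv h (\<phi> z) * deriv \<phi> z" if "z \<in> U" for z
  proof -
    have "(h has_field_derivative deriv h (\<phi> z)) (at (\<phi> z))"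
      using holomorphic_derivI[OF h V] \<phi>(2) that by blast
    from DERIV_chain2[OF this holomorphic_derivI[OF \<phi>(1) U that]] show ?thesis
      by (simp add: DERIV_imp_deriv)
  qed
  have "cm_upto n (\<lambda>z. - deriv h (\<phi> z) * deriv \<phi> z)"
    using cm_upto_mult[OF h'\<phi> \<phi>' U pos h'_cm \<phi>'_cm] .
  also have "?this \<longleftrightarrow> cm_upto n (\<lambda>z. - deriv (\<lambda>z. h (\<phi> z)) z)"
    using chain holomorphic_on_mult[OF h'\<phi> \<phi>'] holomorphic_deriv[OF h\<phi> U]
    by (intro cm_upto_cong[OF _ _ U pos]) (auto intro: holomorphic_on_minus)
  finally have "cm_upto n (\<lambda>z. - deriv (\<lambda>z. h (\<phi> z)) z)" .
  then show ?thesis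
    using cm_upto_Suc_iff[OF h\<phi> U pos] h_nonneg by blast
qed

lemma cm_upto_compose:
  assumes U: "open U" and V: "open V" and \<phi>: "\<phi> holomorphic_on U" "\<phi> ` U \<subseteq> V"
    and pos_U: "\<And>x. x > 0 \<Longrightarrow> complex_of_real x \<in> U"
    and pos_V: "\<And>x. x > 0 \<Longrightarrow> complex_of_real x \<in> V"
    and \<phi>_pos: "\<And>x. x > 0 \<Longrightarrow> \<exists>y>0. \<phi> (complex_of_real x) = complex_of_real y"
    and h: "h holomorphic_on V" and h_cm: "\<And>k. cm_upto k h"
    and \<phi>'_cm: "cm_upto n (deriv \<phi>)"
  shows "cm_upto (Suc n) (\<lambda>z. h (\<phi> z))"
  using h h_cm \<phi>'_cm
proof (induction n arbitrary: h)
  have nonneg: "cm_upto 0 (\<lambda>z. g (\<phi> z))" if "cm_upto 0 g" for g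
    using that \<phi>_pos unfolding cm_upto_0 by force
  have deriv_cm: "(\<lambda>w. - deriv g w) holomorphic_on V \<and> (\<forall>k. cm_upto k (\<lambda>w. - deriv g w))"
    if "g holomorphic_on V" "\<And>k. cm_upto k g" for g
    using that cm_upto_Suc_iff[OF that(1) V pos_V] holomorphic_deriv[OF that(1) V]
    by (auto intro: holomorphic_on_minus)
  {
    case 0
    show ?case
      using deriv_cm[OF 0(1,2)] nonneg 0
      by (intro cm_upto_compose_Suc[OF U V \<phi> 0(1) pos_U]) auto
  next
    case (Suc m)
    have "cm_upto (Suc m) (\<lambda>z. - deriv h (\<phi> z))"
      using deriv_cm[OF Suc.prems(1,2)] Suc.prems(3)
      by (intro Suc.IH) (auto elim: cm_upto_mono)
    then show ?case
      using nonneg Suc.prems by (intro cm_upto_compose_Suc[OF U V \<phi> Suc.prems(1) pos_U]) auto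
  }
qed

lemma cm_exp_neg: "cm_upto n (\<lambda>w. exp (- w))"
proof (induction n)
  case 0
  have "exp (- complex_of_real x) = complex_of_real (exp (- x))" for x
    by (simp flip: exp_of_real)
  then show ?case
    by (simp add: cm_upto_0 less_eq_complex_def)
next
  case (Suc n)
  have hol: "(\<lambda>w. exp (- w)) holomorphic_on UNIV"
    by (intro holomorphic_intros)
  have "deriv (\<lambda>w. exp (- w)) z = - exp (- z)" for z :: complex
    by (rule DERIV_imp_deriv) (auto intro!: derivative_eq_intros)
  then have "(\<lambda>z. - deriv (\<lambda>w. exp (- w)) z) = (\<lambda>w :: complex. exp (- w))"
    by simp
  then show ?case
    unfolding cm_upto_Suc_iff[OF hol open_UNIV UNIV_I] using Suc cm_upto_mono[of n _ 0] by simp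
qed

lemma cm_inverse_1_plus: "cm_upto n (\<lambda>w. inverse (1 + w))"
proof (induction n)
  case 0
  have "inverse (1 + complex_of_real x) = complex_of_real (inverse (1 + x))" for x
    by simp
  then show ?case
    by (simp add: cm_upto_0 less_eq_complex_def)
next
  case (Suc n)
  define U :: "complex set" where "U = - {-1}"
  have U: "open U" and pos: "\<And>x. x > 0 \<Longrightarrow> complex_of_real x \<in> U"
    by (auto simp: U_def complex_eq_iff)
  have hol: "(\<lambda>w. inverse (1 + w)) holomorphic_on U"
    by (intro holomorphic_intros) (auto simp: U_def add_eq_0_iff)
  have "- deriv (\<lambda>w. inverse (1 + w)) z = inverse (1 + z) * inverse (1 + z)" if "z \<in> U" for z
  proof -
    have "1 + z \<noteq> 0" using that by (auto simp: U_def add_eq_0_iff)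
    then have "((\<lambda>w. inverse (1 + w)) has_field_derivative - (inverse (1 + z) * inverse (1 + z))) (at z)"
      by (auto intro!: derivative_eq_intros simp: power2_eq_square)
    then show ?thesis by (simp add: DERIV_imp_deriv)
  qed
  then have "cm_upto n (\<lambda>z. inverse (1 + z) * inverse (1 + z)) \<longleftrightarrow>
             cm_upto n (\<lambda>z. - deriv (\<lambda>w. inverse (1 + w)) z)"
    using holomorphic_on_mult[OF hol hol] holomorphic_deriv[OF hol U]
    by (intro cm_upto_cong[OF _ _ U pos]) (auto intro: holomorphic_on_minus)
  moreover have "cm_upto n (\<lambda>z. inverse (1 + z) * inverse (1 + z))"
    using Suc by (intro cm_upto_mult[OF hol hol U pos]) (auto elim: cm_upto_mono)
  ultimately show ?case
    using Suc cm_upto_Suc_iff[OF hol U pos] cm_upto_mono by blast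
qed

lemma has_real_derivative_Re_of_real:
  assumes "F holomorphic_on U" "open U" "complex_of_real x \<in> U"
  shows "((\<lambda>t. Re (F (of_real t))) has_real_derivative Re (deriv F (of_real x))) (at x)"
  using has_field_derivative_Re[OF has_vector_derivative_real_field[OF holomorphic_derivI[OF assms]]] .

lemma eventually_nhds_of_real_in_open:
  assumes "open U" "complex_of_real x \<in> U"
  shows "\<forall>\<^sub>F t in nhds x. complex_of_real t \<in> U"
proof -
  have "open (complex_of_real -` U)"
    using assms(1) by (rule continuous_open_vimage) (intro continuous_intros)
  from eventually_nhds_in_open[OF this] assms(2) show ?thesis
    by simp
qed

lemma higher_deriv_Re_of_real:
  assumes F: "F holomorphic_on U" and U: "open U" and x: "complex_of_real x \<in> U"
  shows "(deriv ^^ n) (\<lambda>t. Re (F (of_real t))) x = Re ((deriv ^^ n) F (of_real x))"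
  using x
proof (induction n arbitrary: x)
  case (Suc n)
  have "\<forall>\<^sub>F t in nhds x. (deriv ^^ n) (\<lambda>t. Re (F (of_real t))) t = Re ((deriv ^^ n) F (of_real t))"
    using eventually_nhds_of_real_in_open[OF U Suc.prems] by (rule eventually_mono) (rule Suc.IH)
  then have "deriv ((deriv ^^ n) (\<lambda>t. Re (F (of_real t)))) x = deriv (\<lambda>t. Re ((deriv ^^ n) F (of_real t))) x"
    by (rule deriv_cong_ev) simp
  also have "\<dots> = Re ((deriv ^^ Suc n) F (of_real x))"
    using has_real_derivative_Re_of_real[OF holomorphic_higher_deriv[OF F U] U Suc.prems]
    by (simp add: DERIV_imp_deriv)
  finally show ?case by simp
qed simp

lemma has_real_derivative_higher_deriv_Re_of_real:
  assumes F: "F holomorphic_on U" and U: "open U" and x: "complex_of_real x \<in> U"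
  shows "((deriv ^^ n) (\<lambda>t. Re (F (of_real t))) has_real_derivative Re ((deriv ^^ Suc n) F (of_real x))) (at x)"
proof -
  have "\<forall>\<^sub>F t in nhds x. (deriv ^^ n) (\<lambda>t. Re (F (of_real t))) t = Re ((deriv ^^ n) F (of_real t))"
    using eventually_nhds_of_real_in_open[OF U x] by (rule eventually_mono) (rule higher_deriv_Re_of_real[OF F U])
  then show ?thesis
    using has_real_derivative_Re_of_real[OF holomorphic_higher_deriv[OF F U] U x]
    by (subst DERIV_cong_ev[OF refl _ refl]) simp_all
qed

lemma bernstein_function_Re_of_real:
  assumes F: "F holomorphic_on U" and U: "open U" and pos: "\<And>x. x > 0 \<Longrightarrow> complex_of_real x \<in> U"
    and F_pos: "\<And>x. x > 0 \<Longrightarrow> Re (F (of_real x)) > 0" and F'_cm: "\<And>n. cm_upto n (deriv F)"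
  shows "bernstein_function (\<lambda>x. Re (F (of_real x)))"
proof -
  define f where "f = (\<lambda>x. Re (F (of_real x)))"
  have f: "smooth_pos f"
    unfolding smooth_pos_def f_def
    using has_real_derivative_higher_deriv_Re_of_real[OF F U pos] real_differentiable_def by blast
  have deriv_f: "(deriv ^^ n) (deriv f) = (deriv ^^ Suc n) f" for n
    by (simp only: funpow_Suc_right o_apply)
  have "0 \<le> (-1) ^ n * (deriv ^^ n) (deriv f) x" if "x > 0" for n x
  proof -
    have "(deriv ^^ n) (deriv f) x = Re ((deriv ^^ Suc n) F (of_real x))"
      unfolding deriv_f unfolding f_def by (rule higher_deriv_Re_of_real[OF F U pos[OF that]])
    also have "\<dots> = Re ((deriv ^^ n) (deriv F) (of_real x))"
      by (simp only: funpow_Suc_right o_apply)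
    finally show ?thesis
      using F'_cm[of n] that unfolding cm_upto_def less_eq_complex_def by simp
  qed
  moreover have "smooth_pos (deriv f)"
    using f unfolding smooth_pos_def deriv_f by blast
  ultimately show ?thesis
    using f F_pos unfolding bernstein_function_def completely_monotonic_def f_def by blast
qed

lemma open_lambert_slit_plane: "open lambert_slit_plane"
  unfolding lambert_slit_plane_def
  by (intro open_Compl closed_Collect_conj closed_Collect_eq closed_Collect_le continuous_intros)

lemma lambert_slit_planeI:
  assumes "Im z = 0 \<Longrightarrow> Re z > - exp (-1)"
  shows "z \<in> lambert_slit_plane"
  using assms unfolding lambert_slit_plane_def by force

lemma of_real_in_lambert_slit_plane: "x > 0 \<Longrightarrow> complex_of_real x \<in> lambert_slit_plane"
  by (intro lambert_slit_planeI) (use exp_gt_zero[of "-1"] in \<open>simp only: Re_complex_of_real; linarith\<close>)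

lemma upper_half_plane_subset_lambert_slit_plane: "{z. Im z > 0} \<subseteq> lambert_slit_plane"
  by (auto intro: lambert_slit_planeI)

lemma ball_subset_lambert_slit_plane: "ball 0 (exp (-1)) \<subseteq> lambert_slit_plane"
proof (intro subsetI lambert_slit_planeI)
  fix z :: complex assume "z \<in> ball 0 (exp (-1))"
  then have "\<bar>Re z\<bar> < exp (-1)"
    using abs_Re_le_cmod[of z] by simp
  then show "Re z > - exp (-1)" by simp
qed

lemma cnj_in_lambert_slit_plane: "z \<in> lambert_slit_plane \<Longrightarrow> cnj z \<in> lambert_slit_plane"
  unfolding lambert_slit_plane_def by simp

lemma starlike_lambert_slit_plane: "starlike lambert_slit_plane"
  unfolding starlike_def
proof (intro bexI ballI subsetI)
  fix z y assume z: "z \<in> lambert_slit_plane" and "y \<in> closed_segment 0 z"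
  then obtain u where u: "0 \<le> u" "u \<le> 1" "y = u *\<^sub>R z"
    by (auto simp: closed_segment_def)
  show "y \<in> lambert_slit_plane"
  proof (rule lambert_slit_planeI)
    assume "Im y = 0"
    show "Re y > - exp (-1)"
    proof (cases "u = 0")
      case False
      with u \<open>Im y = 0\<close> have "Im z = 0" by simp
      then have "Re z > - exp (-1)"
        using z unfolding lambert_slit_plane_def by auto
      moreover have "Re z \<le> u * Re z \<or> 0 \<le> u * Re z"
        using u mult_left_le_one_le[of "- Re z" u] by (cases "Re z \<ge> 0") auto
      moreover have "Re y = u * Re z" and "- exp (-1) < (0::real)"
        using u(3) by simp_all
      ultimately show ?thesis
        by linarith
    qed (use u in simp)
  qed
qed (simp add: lambert_slit_planeI)

locale principal_lambert =
  fixes W :: "complex \<Rightarrow> complex"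
  assumes principal_lambert_W: "principal_lambert_W W"
begin

abbreviation (input) S where "S \<equiv> lambert_slit_plane"

lemma W_holomorphic: "W holomorphic_on S"
  using principal_lambert_W unfolding principal_lambert_W_def by blast

lemma W_exp_W: "z \<in> S \<Longrightarrow> W z * exp (W z) = z"
  using principal_lambert_W unfolding principal_lambert_W_def by blast

lemma zero_in_S: "0 \<in> S"
  using ball_subset_lambert_slit_plane by auto

lemma W_0: "W 0 = 0"
  using W_exp_W[OF zero_in_S] by simp

lemma W_neq_minus_one: "z \<in> S \<Longrightarrow> W z \<noteq> -1"
proof
  assume z: "z \<in> S" and "W z = -1"
  then have "z = - exp (-1)"
    using W_exp_W[OF z] by simp
  with z show False
    unfolding lambert_slit_plane_def by (simp add: Re_exp Im_exp)
qed

lemma deriv_W: assumes z: "z \<in> S" shows "deriv W z = exp (- W z) * inverse (1 + W z)"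
proof -
  have W': "(W has_field_derivative deriv W z) (at z)"
    using holomorphic_derivI[OF W_holomorphic open_lambert_slit_plane z] .
  have "((\<lambda>z. W z * exp (W z)) has_field_derivative deriv W z * (exp (W z) * (1 + W z))) (at z)"
    using W' by (auto intro!: derivative_eq_intros simp: algebra_simps)
  then have "((\<lambda>z. z) has_field_derivative deriv W z * (exp (W z) * (1 + W z))) (at z)"
    by (rule has_field_derivative_transform_within_open[OF _ open_lambert_slit_plane z]) (simp add: W_exp_W)
  then have "exp (W z) * (1 + W z) * deriv W z = 1"
    using DERIV_ident DERIV_unique by (metis mult.commute)
  then have "inverse (exp (W z) * (1 + W z)) = deriv W z"
    by (rule inverse_unique)
  then show ?thesis
    by (simp add: exp_minus)
qed

lemma W_cnj: assumes z: "z \<in> S" shows "W (cnj z) = cnj (W z)"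
proof -
  obtain r where "r > 0" and series: "\<And>z. norm z < r \<Longrightarrow>
      (\<lambda>n. if n = 0 then 0 else (- of_nat n) ^ (n - 1) * z ^ n / fact n) sums W z"
    using principal_lambert_W unfolding principal_lambert_W_def by blast
  define B where "B = ball (0 :: complex) (min r (exp (-1)))"
  have B: "open B" "B \<noteq> {}" "B \<subseteq> S"
    using \<open>r > 0\<close> ball_subset_lambert_slit_plane by (auto simp: B_def min_le_iff_disj)
  \<comment> \<open>The Taylor coefficients of \<open>W\<close> at \<open>0\<close> are real.\<close>
  have W_B: "W w = (cnj \<circ> W \<circ> cnj) w" if "w \<in> B" for w
  proof -
    have "norm w < r" using that by (simp add: B_def)
    then have "(\<lambda>n. cnj (if n = 0 then 0 else (- of_nat n) ^ (n - 1) * cnj w ^ n / fact n))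
        sums cnj (W (cnj w))"
      using series[of "cnj w"] by (simp add: sums_cnj)
    then have "(\<lambda>n. if n = 0 then 0 else (- of_nat n) ^ (n - 1) * w ^ n / fact n) sums cnj (W (cnj w))"
      by (simp add: if_distrib cong: if_cong)
    with series[OF \<open>norm w < r\<close>] show ?thesis
      using sums_unique2 by fastforce
  qed
  have "cnj ` S \<subseteq> S"
    using cnj_in_lambert_slit_plane by blast
  then have "cnj \<circ> W \<circ> cnj holomorphic_on S"
    by (intro holomorphic_on_compose_cnj_cnj holomorphic_on_subset[OF W_holomorphic]
        open_lambert_slit_plane)
  from analytic_continuation_open[OF B(1) open_lambert_slit_plane B(2)
      starlike_imp_connected[OF starlike_lambert_slit_plane] B(3) W_holomorphic this W_B
      cnj_in_lambert_slit_plane[OF z]]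
  show ?thesis by simp
qed

lemma W_eq_of_realD: "z \<in> S \<Longrightarrow> W z = complex_of_real w \<Longrightarrow> z = complex_of_real (w * exp w)"
  using W_exp_W[of z] by (simp add: exp_of_real)

lemma W_of_real_pos: assumes "x > 0" shows "\<exists>w>0. W (of_real x) = of_real w"
proof (intro exI conjI)
  have x: "complex_of_real x \<in> S"
    using assms by (rule of_real_in_lambert_slit_plane)
  have "W (of_real x) \<in> \<real>"
    using W_cnj[OF x] by (simp add: Reals_cnj_iff)
  then show W_real: "W (of_real x) = of_real (Re (W (of_real x)))"
    by (simp add: complex_is_Real_iff complex_eq_iff)
  have "Re (W (of_real x)) * exp (Re (W (of_real x))) = x"
    using W_eq_of_realD[OF x W_real] by (simp only: of_real_eq_iff)
  with \<open>x > 0\<close> show "Re (W (of_real x)) > 0"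
    by (metis exp_gt_zero zero_less_mult_pos2)
qed

lemma cm_deriv_W: "cm_upto n (deriv W)"
proof -
  define V :: "complex set" where "V = - {-1}"
  define g where "g = (\<lambda>w :: complex. exp (- w) * inverse (1 + w))"
  have V: "open V" "\<And>x. x > 0 \<Longrightarrow> complex_of_real x \<in> V" "W ` S \<subseteq> V"
    using W_neq_minus_one by (auto simp: V_def complex_eq_iff)
  have g: "g holomorphic_on V"
    unfolding g_def V_def by (intro holomorphic_intros) (auto simp: add_eq_0_iff)
  have g_cm: "cm_upto k g" for k
    unfolding g_def using V(1,2) cm_exp_neg cm_inverse_1_plus
    by (intro cm_upto_mult[of _ V]) (auto simp: V_def add_eq_0_iff intro!: holomorphic_intros)
  have "cm_upto k (\<lambda>z. g (W z)) \<longleftrightarrow> cm_upto k (deriv W)" for k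
    using holomorphic_on_compose_gen[OF W_holomorphic g V(3)] deriv_W
    by (intro cm_upto_cong[OF _ holomorphic_deriv[OF W_holomorphic open_lambert_slit_plane]
          open_lambert_slit_plane of_real_in_lambert_slit_plane]) (auto simp: g_def o_def)
  moreover have "cm_upto n (\<lambda>z. g (W z))"
  proof (induction n)
    case 0
    show ?case
      using g_cm[of 0] W_of_real_pos unfolding cm_upto_0 by force
  next
    case (Suc n)
    with calculation show ?case
      by (intro cm_upto_compose[OF open_lambert_slit_plane V(1) W_holomorphic V(3)
          of_real_in_lambert_slit_plane V(2) W_of_real_pos g g_cm]) simp_all
  qed
  ultimately show ?thesis by blast
qed

lemma ex_Im_W_pos: "\<exists>y. Im y > 0 \<and> Im (W y) > 0"
proof -
  have "deriv W 0 = 1"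
    using deriv_W[OF zero_in_S] W_0 by simp
  then have "(W has_field_derivative 1) (at 0)"
    using holomorphic_derivI[OF W_holomorphic open_lambert_slit_plane zero_in_S] by simp
  then have "((\<lambda>y. W y / y) \<longlongrightarrow> 1) (at 0)"
    by (simp add: has_field_derivative_iff W_0)
  then obtain s where "s > 0" and s: "\<And>y. y \<noteq> 0 \<Longrightarrow> norm y < s \<Longrightarrow> norm (W y / y - 1) < 1"
    unfolding LIM_eq by (metis diff_zero zero_less_one)
  define y where "y = \<i> * complex_of_real (s / 2)"
  have "norm (W y / y - 1) < 1"
    using \<open>s > 0\<close> by (intro s) (auto simp: y_def norm_mult)
  then have "Re (W y / y) > 0"
    using abs_Re_le_cmod[of "W y / y - 1"] by simp
  moreover have "Re (W y / y) = Im (W y) / (s / 2)"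
    using \<open>s > 0\<close> by (simp add: y_def Re_divide power2_eq_square)
  ultimately show ?thesis
    using \<open>s > 0\<close> by (intro exI[of _ y]) (simp add: y_def zero_less_divide_iff)
qed

lemma Im_W_pos: assumes z: "Im z > 0" shows "Im (W z) > 0"
proof (rule ccontr)
  assume "\<not> Im (W z) > 0"
  obtain y where y: "Im y > 0" "Im (W y) > 0"
    using ex_Im_W_pos by blast
  have "connected (W ` {z. Im z > 0})"
    by (intro connected_continuous_image convex_connected convex_halfspace_Im_gt
        holomorphic_on_imp_continuous_on holomorphic_on_subset[OF W_holomorphic]
        upper_half_plane_subset_lambert_slit_plane)
  then obtain u where u: "Im u > 0" "Im (W u) = 0"
    using connected_ivt_component[of _ "W z" "W y" \<i> 0] z y \<open>\<not> Im (W z) > 0\<close> by force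
  then have "W u = complex_of_real (Re (W u))"
    by (simp add: complex_eq_iff)
  then have "u = complex_of_real (Re (W u) * exp (Re (W u)))"
    using W_eq_of_realD u(1) upper_half_plane_subset_lambert_slit_plane by blast
  then have "Im u = 0"
    by (metis Im_complex_of_real)
  with u(1) show False by simp
qed

end

theorem mainTheorem11:
  fixes W :: "complex \<Rightarrow> complex"
  assumes "principal_lambert_W W"
  shows "complete_bernstein_function (\<lambda>x. Re (W (complex_of_real x)))"
proof -
  interpret principal_lambert W
    using assms by unfold_locales
  have "bernstein_function (\<lambda>x. Re (W (complex_of_real x)))"
    using W_of_real_pos cm_deriv_W
    by (intro bernstein_function_Re_of_real[OF W_holomorphic open_lambert_slit_plane
          of_real_in_lambert_slit_plane]) force+
  moreover have "W (complex_of_real x) = complex_of_real (Re (W (complex_of_real x)))" if "x > 0" for x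
    using W_of_real_pos[OF that] by force
  ultimately show ?thesis
    unfolding complete_bernstein_function_def
    using open_lambert_slit_plane upper_half_plane_subset_lambert_slit_plane
      of_real_in_lambert_slit_plane W_holomorphic Im_W_pos
    by (intro conjI exI[of _ W] exI[of _ lambert_slit_plane]) auto
qed

end
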